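(* Let $M'=M[D,K]$ be a compatible minor of the weighted uncertainty matroid $\mathcal{M}$ such that $M'$ contains no element $e$ with $w_e=U_e$ or $w_e=L_e$, and let $B$ be any minimum-weight basis of $M'$. Then $M[D',K']$ with $K'=K\cup B$ and $D'=D\cup(E(M')\setminus B)$ is a compatible minor of $\mathcal{M}$.
   Context: A weighted uncertainty matroid $\mathcal{M}=(E,\mathcal{I},A,w)$ consists of a matroid $M=(E,\mathcal{I})$ on a finite set $E$, for each $e\in E$ a non-empty finite union $A_e$ of bounded real intervals (each open or closed), a weight $w_e\in A_e$, and a query cost $c_e\ge0$. $L_e=\inf A_e$, $U_e=\sup A_e$. A minimum-weight basis (MWB) is a basis minimizing total weight. A weight assignment is $w^*$ with $w^*_e\in A_e$, consistent with $Q$ if $w^*_e=w_e$ on $Q$. $Q$ verifies an MWB $B$ if for every weight assignment consistent with $Q$, $B$ is an MWB with respect to it; a certificate for $\mathcal{M}$ is a set verifying some MWB, and $c^*$ is the minimum cost $\sum_{e\in Q}c_e$ of a certificate for $\mathcal{M}$. For $D,K\subseteq E$, $M[D,K]$ is the matroid obtained from $M$ by deleting $D$ and contracting $K$, ground set $E(M[D,K])=E\setminus(D\cup K)$, weights restricted. $M[D,K]$ is a compatible minor if there is a set $Q$ of cost $c^*$ verifying an MWB $B$ of $\mathcal{M}$ with $K\subseteq B$ and $D\cap B=\emptyset$. *)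

theory Defs
  imports Complex_Main
begin

definition matroid :: "'a set \<Rightarrow> ('a set \<Rightarrow> bool) \<Rightarrow> bool" where
  "matroid E indep \<longleftrightarrow>
     finite E \<and> indep {} \<and>
     (\<forall>X. indep X \<longrightarrow> X \<subseteq> E) \<and>
     (\<forall>X Y. indep Y \<and> X \<subseteq> Y \<longrightarrow> indep X) \<and>
     (\<forall>X Y. indep X \<and> indep Y \<and> card X < card Y \<longrightarrow> (\<exists>y\<in>Y - X. indep (insert y X)))"

definition basis :: "('a set \<Rightarrow> bool) \<Rightarrow> 'a set \<Rightarrow> bool" where
  "basis indep B \<longleftrightarrow> indep B \<and> (\<forall>X. indep X \<and> B \<subseteq> X \<longrightarrow> X = B)"

definition mwb :: "('a set \<Rightarrow> bool) \<Rightarrow> ('a \<Rightarrow> real) \<Rightarrow> 'a set \<Rightarrow> bool" where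
  "mwb indep w B \<longleftrightarrow> basis indep B \<and> (\<forall>B'. basis indep B' \<longrightarrow> sum w B \<le> sum w B')"

text \<open>Minor M[D,K]: delete D, contract K. A set I is independent in M[D,K] iff
  I avoids D \<union> K and I \<union> J is independent for some maximal independent subset J of K.\<close>
definition minor_indep :: "'a set \<Rightarrow> ('a set \<Rightarrow> bool) \<Rightarrow> 'a set \<Rightarrow> 'a set \<Rightarrow> 'a set \<Rightarrow> bool" where
  "minor_indep E indep D K I \<longleftrightarrow>
     I \<subseteq> E - (D \<union> K) \<and>
     (\<exists>J. J \<subseteq> K \<and> indep J \<and> (\<forall>J'. J \<subseteq> J' \<and> J' \<subseteq> K \<and> indep J' \<longrightarrow> J' = J) \<and> indep (I \<union> J))"

definition oc_interval :: "real set \<Rightarrow> bool" where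
  "oc_interval I \<longleftrightarrow> (\<exists>a b. I = {a..b} \<or> I = {a<..<b})"

definition uncertainty_area :: "real set \<Rightarrow> bool" where
  "uncertainty_area S \<longleftrightarrow> S \<noteq> {} \<and> (\<exists>\<I>. finite \<I> \<and> (\<forall>I\<in>\<I>. oc_interval I) \<and> S = \<Union>\<I>)"

definition uncertainty_matroid ::
  "'a set \<Rightarrow> ('a set \<Rightarrow> bool) \<Rightarrow> ('a \<Rightarrow> real set) \<Rightarrow> ('a \<Rightarrow> real) \<Rightarrow> ('a \<Rightarrow> real) \<Rightarrow> bool" where
  "uncertainty_matroid E indep A w c \<longleftrightarrow>
     matroid E indep \<and> (\<forall>e\<in>E. uncertainty_area (A e) \<and> w e \<in> A e \<and> c e \<ge> 0)"

definition lowerL :: "('a \<Rightarrow> real set) \<Rightarrow> 'a \<Rightarrow> real" where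
  "lowerL A e = Inf (A e)"

definition upperU :: "('a \<Rightarrow> real set) \<Rightarrow> 'a \<Rightarrow> real" where
  "upperU A e = Sup (A e)"

definition weight_assignment :: "'a set \<Rightarrow> ('a \<Rightarrow> real set) \<Rightarrow> ('a \<Rightarrow> real) \<Rightarrow> bool" where
  "weight_assignment E A w' \<longleftrightarrow> (\<forall>e\<in>E. w' e \<in> A e)"

definition consistent :: "('a \<Rightarrow> real) \<Rightarrow> 'a set \<Rightarrow> ('a \<Rightarrow> real) \<Rightarrow> bool" where
  "consistent w Q w' \<longleftrightarrow> (\<forall>e\<in>Q. w' e = w e)"

definition verifies ::
  "'a set \<Rightarrow> ('a set \<Rightarrow> bool) \<Rightarrow> ('a \<Rightarrow> real set) \<Rightarrow> ('a \<Rightarrow> real) \<Rightarrow> 'a set \<Rightarrow> 'a set \<Rightarrow> bool" where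
  "verifies E indep A w Q B \<longleftrightarrow>
     (\<forall>w'. weight_assignment E A w' \<and> consistent w Q w' \<longrightarrow> mwb indep w' B)"

definition certificate ::
  "'a set \<Rightarrow> ('a set \<Rightarrow> bool) \<Rightarrow> ('a \<Rightarrow> real set) \<Rightarrow> ('a \<Rightarrow> real) \<Rightarrow> 'a set \<Rightarrow> bool" where
  "certificate E indep A w Q \<longleftrightarrow> Q \<subseteq> E \<and> (\<exists>B. verifies E indep A w Q B)"

definition opt_cost ::
  "'a set \<Rightarrow> ('a set \<Rightarrow> bool) \<Rightarrow> ('a \<Rightarrow> real set) \<Rightarrow> ('a \<Rightarrow> real) \<Rightarrow> ('a \<Rightarrow> real) \<Rightarrow> real" where
  "opt_cost E indep A w c = Min (sum c ` {Q. certificate E indep A w Q})"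

definition compatible_minor ::
  "'a set \<Rightarrow> ('a set \<Rightarrow> bool) \<Rightarrow> ('a \<Rightarrow> real set) \<Rightarrow> ('a \<Rightarrow> real) \<Rightarrow> ('a \<Rightarrow> real)
   \<Rightarrow> 'a set \<Rightarrow> 'a set \<Rightarrow> bool" where
  "compatible_minor E indep A w c D K \<longleftrightarrow>
     D \<subseteq> E \<and> K \<subseteq> E \<and>
     (\<exists>Q B. Q \<subseteq> E \<and> sum c Q = opt_cost E indep A w c \<and> verifies E indep A w Q B \<and>
            mwb indep w B \<and> K \<subseteq> B \<and> D \<inter> B = {})"

end

theory Submission
  imports Defs
begin

text \<open>Since the old basis \<open>B\<^sub>0\<close> contains \<open>K\<close> and avoids \<open>D\<close>, the basis \<open>K \<union> B\<close> of \<open>M\<close> obtained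
  from a minimum-weight basis \<open>B\<close> of the minor has the same weight as \<open>B\<^sub>0\<close>. An element of the
  symmetric difference of \<open>B\<^sub>0\<close> and \<open>K \<union> B\<close> that is not an endpoint of its area must have been
  queried: otherwise moving its weight within its area (down if it lies in \<open>K \<union> B\<close>, up if it
  lies in \<open>B\<^sub>0\<close>) would make \<open>K \<union> B\<close> strictly lighter than \<open>B\<^sub>0\<close>, although the query set verifies
  \<open>B\<^sub>0\<close>. Hence the two bases have equal weight under every assignment consistent with the
  query set, which therefore verifies \<open>K \<union> B\<close> as well.\<close>

lemma sum_fun_upd:
  fixes w :: "'a \<Rightarrow> 'b::ab_group_add"
  assumes "finite S"
  shows "sum (w(e := v)) S = sum w S + (if e \<in> S then v - w e else 0)"
proof (cases "e \<in> S")
  case True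
  have "sum (w(e := v)) S = (w(e := v)) e + sum (w(e := v)) (S - {e})"
    by (rule sum.remove[OF assms True])
  also have "sum (w(e := v)) (S - {e}) = sum w (S - {e})"
    by (intro sum.cong) auto
  also have "(w(e := v)) e + sum w (S - {e}) = sum w S + (v - w e)"
    using sum.remove[OF assms True, of w] by (simp add: algebra_simps)
  finally show ?thesis using True by simp
next
  case False
  then have "sum (w(e := v)) S = sum w S"
    by (intro sum.cong) auto
  then show ?thesis using False by simp
qed

lemma sum_eq_if_agree_on_symdiff:
  fixes w w' :: "'a \<Rightarrow> 'b::ab_group_add"
  assumes "finite S" "finite T" and "\<And>e. e \<in> (S - T) \<union> (T - S) \<Longrightarrow> w' e = w e"
    and "sum w S = sum w T"
  shows "sum w' S = sum w' T"
proof -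
  have split: "sum f X = sum f (X \<inter> Y) + sum f (X - Y)" if "finite X" for f :: "'a \<Rightarrow> 'b" and X Y
    using sum.Int_Diff[OF that] .
  have "sum w' (S - T) = sum w (S - T)" "sum w' (T - S) = sum w (T - S)"
    using assms(3) by (auto intro: sum.cong)
  then show ?thesis
    using split[OF assms(1), of _ T] split[OF assms(2), of _ S] assms(4)
    by (simp add: Int_commute)
qed

lemma minor_indep_iff:
  assumes "indep K"
  shows "minor_indep E indep D K I \<longleftrightarrow> I \<subseteq> E - (D \<union> K) \<and> indep (I \<union> K)"
proof
  assume "minor_indep E indep D K I"
  then obtain J where "I \<subseteq> E - (D \<union> K)" "J \<subseteq> K"
      "\<forall>J'. J \<subseteq> J' \<and> J' \<subseteq> K \<and> indep J' \<longrightarrow> J' = J" "indep (I \<union> J)"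
    unfolding minor_indep_def by blast
  with assms show "I \<subseteq> E - (D \<union> K) \<and> indep (I \<union> K)" by blast
next
  assume "I \<subseteq> E - (D \<union> K) \<and> indep (I \<union> K)"
  with assms show "minor_indep E indep D K I"
    unfolding minor_indep_def by (intro conjI exI[of _ K]) auto
qed

lemma verifies_imp_mwb:
  assumes "\<forall>e\<in>E. w e \<in> A e" "verifies E indep A w Q B"
  shows "mwb indep w B"
  using assms unfolding verifies_def weight_assignment_def consistent_def by blast

lemma mwb_sum_le: "mwb indep w B \<Longrightarrow> basis indep B' \<Longrightarrow> sum w B \<le> sum w B'"
  unfolding mwb_def by blast

context
  fixes E :: "'a set" and indep :: "'a set \<Rightarrow> bool"
  assumes matroid: "matroid E indep"
begin

lemma indep_subset_ground: "indep X \<Longrightarrow> X \<subseteq> E"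
  using matroid unfolding matroid_def by blast

lemma finite_ground: "finite E"
  using matroid unfolding matroid_def by blast

lemma indep_finite: "indep X \<Longrightarrow> finite X"
  using finite_subset[OF indep_subset_ground finite_ground] .

lemma indep_subset: "indep Y \<Longrightarrow> X \<subseteq> Y \<Longrightarrow> indep X"
  using matroid unfolding matroid_def by blast

lemma indep_augment:
  "indep X \<Longrightarrow> indep Y \<Longrightarrow> card X < card Y \<Longrightarrow> \<exists>y\<in>Y - X. indep (insert y X)"
  using matroid unfolding matroid_def by blast

lemma basis_if_card_ge:
  assumes "basis indep B" "indep X" "card B \<le> card X"
  shows "basis indep X"
  unfolding basis_def
proof (intro conjI allI impI \<open>indep X\<close>)
  have B: "indep B" "\<And>Z. indep Z \<Longrightarrow> B \<subseteq> Z \<Longrightarrow> Z = B"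
    using assms(1) unfolding basis_def by auto
  fix Y assume Y: "indep Y \<and> X \<subseteq> Y"
  show "Y = X"
  proof (rule ccontr)
    assume "Y \<noteq> X"
    with Y have "card X < card Y"
      using psubset_card_mono[OF indep_finite[of Y]] by blast
    then obtain y where "y \<in> Y - B" "indep (insert y B)"
      using indep_augment[OF B(1)] Y assms(3) by (meson order.strict_trans1)
    then show False using B(2)[of "insert y B"] by blast
  qed
qed

context
  fixes D K B\<^sub>0 :: "'a set"
  assumes basis: "basis indep B\<^sub>0" and K_sub: "K \<subseteq> B\<^sub>0" and D_disj: "D \<inter> B\<^sub>0 = {}"
begin

lemma indep_contracted: "indep K"
  using basis K_sub indep_subset unfolding basis_def by blast

lemmas minor_indep_contracted_iff = minor_indep_iff[of indep K E D, OF indep_contracted]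

lemma basis_minor_diff: "basis (minor_indep E indep D K) (B\<^sub>0 - K)"
  unfolding basis_def
proof (intro conjI allI impI)
  have "B\<^sub>0 \<subseteq> E" "indep B\<^sub>0"
    using basis indep_subset_ground unfolding basis_def by auto
  then show "minor_indep E indep D K (B\<^sub>0 - K)"
    using minor_indep_contracted_iff K_sub D_disj by (auto simp: Un_absorb2)
next
  fix X assume X: "minor_indep E indep D K X \<and> B\<^sub>0 - K \<subseteq> X"
  then have "X \<subseteq> E - (D \<union> K)" "indep (X \<union> K)"
    using minor_indep_contracted_iff by auto
  moreover have "B\<^sub>0 \<subseteq> X \<union> K" using X by blast
  ultimately show "X = B\<^sub>0 - K"
    using basis unfolding basis_def by blast
qed

lemma basis_union_contracted:
  assumes "basis (minor_indep E indep D K) B"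
  shows "basis indep (K \<union> B)"
proof -
  have B: "B \<subseteq> E - (D \<union> K)" "indep (K \<union> B)"
    and B_max: "\<And>X. X \<subseteq> E - (D \<union> K) \<Longrightarrow> indep (X \<union> K) \<Longrightarrow> B \<subseteq> X \<Longrightarrow> X = B"
    using assms minor_indep_contracted_iff unfolding basis_def by (auto simp: Un_commute)
  have "card B\<^sub>0 \<le> card (K \<union> B)"
  proof (rule ccontr)
    assume "\<not> ?thesis"
    then obtain y where y: "y \<in> B\<^sub>0 - (K \<union> B)" "indep (insert y B \<union> K)"
      using indep_augment[OF B(2)] basis unfolding basis_def by (force simp: Un_commute)
    moreover have "insert y B \<subseteq> E - (D \<union> K)"
      using y B(1) basis D_disj indep_subset_ground unfolding basis_def by blast
    ultimately show False using B_max by blast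
  qed
  then show ?thesis using basis_if_card_ge[OF basis B(2)] by blast
qed

lemma mwb_union_contracted:
  assumes "mwb indep w B\<^sub>0" "mwb (minor_indep E indep D K) w B"
  shows "mwb indep w (K \<union> B)" and "sum w (K \<union> B) = sum w B\<^sub>0"
proof -
  have KB: "basis indep (K \<union> B)"
    using assms(2) basis_union_contracted unfolding mwb_def by blast
  have "K \<inter> B = {}" "finite K" "finite B"
    using assms(2) minor_indep_contracted_iff indep_contracted indep_finite KB
    unfolding mwb_def basis_def by auto
  then have "sum w (K \<union> B) = sum w K + sum w B"
    by (rule sum.union_disjoint[rotated 2])
  also have "\<dots> \<le> sum w K + sum w (B\<^sub>0 - K)"
    using mwb_sum_le[OF assms(2) basis_minor_diff] by simp
  also have "\<dots> = sum w B\<^sub>0"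
    using sum.subset_diff[OF K_sub, of w] indep_finite basis unfolding basis_def by simp
  finally show "sum w (K \<union> B) = sum w B\<^sub>0"
    using mwb_sum_le[OF assms(1) KB] by linarith
  then show "mwb indep w (K \<union> B)"
    using assms(1) KB unfolding mwb_def by simp
qed

end

lemma perturbed_sum_le:
  assumes "\<forall>e\<in>E. w e \<in> A e" "verifies E indep A w Q B\<^sub>0" "basis indep B\<^sub>1"
    and "e \<in> E - Q" "v \<in> A e"
  shows "sum (w(e := v)) B\<^sub>0 \<le> sum (w(e := v)) B\<^sub>1"
proof -
  have "weight_assignment E A (w(e := v))" "consistent w Q (w(e := v))"
    using assms unfolding weight_assignment_def consistent_def by auto
  then show ?thesis
    using assms(2,3) mwb_sum_le unfolding verifies_def by blast
qed

lemma unqueried_new_element_is_lower: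
  assumes "\<forall>e\<in>E. w e \<in> A e" "verifies E indep A w Q B\<^sub>0" "basis indep B\<^sub>1"
    and "sum w B\<^sub>1 = sum w B\<^sub>0" "e \<in> B\<^sub>1 - B\<^sub>0" "e \<notin> Q"
  shows "w e = lowerL A e"
  unfolding lowerL_def
proof (rule cInf_eq_minimum[symmetric])
  have B\<^sub>0: "basis indep B\<^sub>0"
    using assms(1,2) verifies_imp_mwb unfolding mwb_def by blast
  have e: "e \<in> E" using assms(3,5) indep_subset_ground unfolding basis_def by blast
  then show "w e \<in> A e" using assms(1) by blast
  fix v assume "v \<in> A e"
  then have "sum (w(e := v)) B\<^sub>0 \<le> sum (w(e := v)) B\<^sub>1"
    using perturbed_sum_le assms(1-3,6) e by blast
  moreover have "finite B\<^sub>0" "finite B\<^sub>1"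
    using assms(3) B\<^sub>0 indep_finite unfolding basis_def by blast+
  ultimately show "w e \<le> v"
    using sum_fun_upd[of B\<^sub>0 w e v] sum_fun_upd[of B\<^sub>1 w e v] assms(4,5) by simp
qed

lemma unqueried_old_element_is_upper:
  assumes "\<forall>e\<in>E. w e \<in> A e" "verifies E indep A w Q B\<^sub>0" "basis indep B\<^sub>1"
    and "sum w B\<^sub>1 = sum w B\<^sub>0" "e \<in> B\<^sub>0 - B\<^sub>1" "e \<notin> Q"
  shows "w e = upperU A e"
  unfolding upperU_def
proof (rule cSup_eq_maximum[symmetric])
  have B\<^sub>0: "basis indep B\<^sub>0"
    using assms(1,2) verifies_imp_mwb unfolding mwb_def by blast
  then have e: "e \<in> E" using assms(5) indep_subset_ground unfolding basis_def by blast
  then show "w e \<in> A e" using assms(1) by blast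
  fix v assume "v \<in> A e"
  then have "sum (w(e := v)) B\<^sub>0 \<le> sum (w(e := v)) B\<^sub>1"
    using perturbed_sum_le assms(1-3,6) e by blast
  moreover have "finite B\<^sub>0" "finite B\<^sub>1"
    using assms(3) B\<^sub>0 indep_finite unfolding basis_def by blast+
  ultimately show "v \<le> w e"
    using sum_fun_upd[of B\<^sub>0 w e v] sum_fun_upd[of B\<^sub>1 w e v] assms(4,5) by simp
qed

lemma verifies_equal_weight_basis:
  assumes "\<forall>e\<in>E. w e \<in> A e" "verifies E indep A w Q B\<^sub>0" "basis indep B\<^sub>1"
    and "sum w B\<^sub>1 = sum w B\<^sub>0"
    and "\<forall>e\<in>B\<^sub>1 - B\<^sub>0. w e \<noteq> lowerL A e" "\<forall>e\<in>B\<^sub>0 - B\<^sub>1. w e \<noteq> upperU A e"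
  shows "verifies E indep A w Q B\<^sub>1"
  unfolding verifies_def
proof (intro allI impI)
  fix w' assume w': "weight_assignment E A w' \<and> consistent w Q w'"
  then have B\<^sub>0: "mwb indep w' B\<^sub>0"
    using assms(2) unfolding verifies_def by blast
  have "(B\<^sub>1 - B\<^sub>0) \<union> (B\<^sub>0 - B\<^sub>1) \<subseteq> Q"
    using unqueried_new_element_is_lower[OF assms(1-4)]
      unqueried_old_element_is_upper[OF assms(1-4)] assms(5,6) by blast
  moreover have "finite B\<^sub>0" "finite B\<^sub>1"
    using assms(3) B\<^sub>0 indep_finite unfolding mwb_def basis_def by blast+
  ultimately have "sum w' B\<^sub>1 = sum w' B\<^sub>0"
    using sum_eq_if_agree_on_symdiff[of B\<^sub>1 B\<^sub>0 w' w] w' assms(4)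
    unfolding consistent_def by blast
  then show "mwb indep w' B\<^sub>1"
    using B\<^sub>0 assms(3) unfolding mwb_def by simp
qed

end

theorem lemma24:
  fixes E D K B :: "'a set" and indep :: "'a set \<Rightarrow> bool"
    and A :: "'a \<Rightarrow> real set" and w c :: "'a \<Rightarrow> real"
  assumes "uncertainty_matroid E indep A w c"
    and "compatible_minor E indep A w c D K"
    and "\<forall>e \<in> E - (D \<union> K). w e \<noteq> upperU A e \<and> w e \<noteq> lowerL A e"
    and "mwb (minor_indep E indep D K) w B"
  shows "compatible_minor E indep A w c (D \<union> ((E - (D \<union> K)) - B)) (K \<union> B)"
proof -
  have M: "matroid E indep" and W: "\<forall>e\<in>E. w e \<in> A e"
    using assms(1) unfolding uncertainty_matroid_def by auto
  obtain Q B\<^sub>0 where "D \<subseteq> E" "K \<subseteq> E" "Q \<subseteq> E" "sum c Q = opt_cost E indep A w c"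
    and Q: "verifies E indep A w Q B\<^sub>0" and B\<^sub>0: "mwb indep w B\<^sub>0" "K \<subseteq> B\<^sub>0" "D \<inter> B\<^sub>0 = {}"
    using assms(2) unfolding compatible_minor_def by blast
  have basis: "basis indep B\<^sub>0" using B\<^sub>0(1) unfolding mwb_def by blast
  note new_mwb = mwb_union_contracted[OF M basis B\<^sub>0(2,3) B\<^sub>0(1) assms(4)]
  have B: "B \<subseteq> E - (D \<union> K)"
    using assms(4) minor_indep_contracted_iff[OF M basis B\<^sub>0(2,3)] unfolding mwb_def basis_def by blast
  have "B\<^sub>0 \<subseteq> E" using M basis indep_subset_ground unfolding basis_def by blast
  then have "(K \<union> B) - B\<^sub>0 \<subseteq> E - (D \<union> K)" "B\<^sub>0 - (K \<union> B) \<subseteq> E - (D \<union> K)"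
    using B B\<^sub>0(2,3) by blast+
  then have "verifies E indep A w Q (K \<union> B)"
    using new_mwb(1) assms(3) unfolding mwb_def
    by (intro verifies_equal_weight_basis[OF M W Q _ new_mwb(2)]) auto
  with new_mwb(1) show ?thesis
    unfolding compatible_minor_def using B B\<^sub>0 \<open>D \<subseteq> E\<close> \<open>K \<subseteq> E\<close> \<open>Q \<subseteq> E\<close> \<open>sum c Q = _\<close>
    by (intro conjI exI[of _ Q] exI[of _ "K \<union> B"]) auto
qed

end
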